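(* Let $A\in\mathcal{PM}(n)$ be a poset matrix with row vectors $r_0,\ldots,r_{n-1}$. Then the Boolean row space $\mathsf{Row}_{\mathbb B}(A)=\{\sum_{i\in S} r_i : S\subseteq X_n\}$ (Boolean sums, the empty sum being $\mathbf 0$) equals the set $\mathsf{PV}_n(A)$ of poset vectors of $A$.
   Context: Let $X_n=\{0,1,\ldots,n-1\}$. A naturally labeled (NL) poset on $X_n$ is a partial order $\preceq$ on $X_n$ such that $x\preceq y$ implies $x\le y$ in the usual integer order. Its poset matrix is the $n\times n$ $(0,1)$-matrix $A=(a_{i,j})_{i,j\in X_n}$ with $a_{i,j}=1$ if $j\preceq i$ and $0$ otherwise; $\mathcal{PM}(n)$ is the set of all such matrices. Arithmetic is in the Boolean algebra $\{0,1\}$ ($1+1=1$). For $v\in\{0,1\}^n$ (a row vector), $A^v=\begin{bmatrix}A&\mathbf{0}\\ v&1\end{bmatrix}$, and $v$ is a poset vector of $A$ if $A^v\in\mathcal{PM}(n+1)$; $\mathsf{PV}_n(A)$ is the set of poset vectors of $A$. *)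

theory Defs
  imports Main
begin

text \<open>A square (0,1)-matrix of size n is represented as a Boolean-valued function
  A :: nat => nat => bool, where only entries A i j with i, j < n are meaningful
  (True = 1, False = 0).\<close>

definition poset_matrix :: "nat \<Rightarrow> (nat \<Rightarrow> nat \<Rightarrow> bool) \<Rightarrow> bool" where
  "poset_matrix n A \<longleftrightarrow>
     (\<forall>i<n. A i i) \<and>
     (\<forall>i<n. \<forall>j<n. A i j \<and> A j i \<longrightarrow> i = j) \<and>
     (\<forall>i<n. \<forall>j<n. \<forall>k<n. A i j \<and> A j k \<longrightarrow> A i k) \<and>
     (\<forall>i<n. \<forall>j<n. A i j \<longrightarrow> j \<le> i)"

text \<open>The bordered matrix A^v = [A 0; v 1] of size n+1.\<close>
definition border :: "nat \<Rightarrow> (nat \<Rightarrow> nat \<Rightarrow> bool) \<Rightarrow> (nat \<Rightarrow> bool) \<Rightarrow> (nat \<Rightarrow> nat \<Rightarrow> bool)" where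
  "border n A v = (\<lambda>i j. if i < n then (if j < n then A i j else False)
                         else (if j < n then v j else True))"

definition vec :: "nat \<Rightarrow> (nat \<Rightarrow> bool) set" where
  "vec n = {v. \<forall>j\<ge>n. \<not> v j}"

definition PV :: "nat \<Rightarrow> (nat \<Rightarrow> nat \<Rightarrow> bool) \<Rightarrow> (nat \<Rightarrow> bool) set" where
  "PV n A = {v \<in> vec n. poset_matrix (Suc n) (border n A v)}"

definition row_space :: "nat \<Rightarrow> (nat \<Rightarrow> nat \<Rightarrow> bool) \<Rightarrow> (nat \<Rightarrow> bool) set" where
  "row_space n A = {(\<lambda>j. j < n \<and> (\<exists>i\<in>S. A i j)) | S. S \<subseteq> {..<n}}"

end

theory Submission
  imports Defs
begin

text \<open>Both sets consist of the down-sets of the poset: bordering by v keeps A a poset matrix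
  exactly when the support of v is closed downwards (transitivity through the new top
  element n), every row of A is a principal down-set, and a down-set is the union of the
  principal down-sets of its elements.\<close>

definition down_closed :: "nat \<Rightarrow> (nat \<Rightarrow> nat \<Rightarrow> bool) \<Rightarrow> (nat \<Rightarrow> bool) \<Rightarrow> bool" where
  "down_closed n A v \<longleftrightarrow> (\<forall>j<n. \<forall>k<n. v j \<and> A j k \<longrightarrow> v k)"

lemma poset_matrix_refl: "poset_matrix n A \<Longrightarrow> i < n \<Longrightarrow> A i i"
  unfolding poset_matrix_def by blast

lemma poset_matrix_antisym: "poset_matrix n A \<Longrightarrow> i < n \<Longrightarrow> j < n \<Longrightarrow> A i j \<Longrightarrow> A j i \<Longrightarrow> i = j"
  unfolding poset_matrix_def by blast

lemma poset_matrix_trans: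
  "poset_matrix n A \<Longrightarrow> i < n \<Longrightarrow> j < n \<Longrightarrow> k < n \<Longrightarrow> A i j \<Longrightarrow> A j k \<Longrightarrow> A i k"
  unfolding poset_matrix_def by blast

lemma poset_matrix_lower: "poset_matrix n A \<Longrightarrow> i < n \<Longrightarrow> j < n \<Longrightarrow> A i j \<Longrightarrow> j \<le> i"
  unfolding poset_matrix_def by blast

lemma down_closed_if_poset_matrix_border:
  assumes "poset_matrix (Suc n) (border n A v)"
  shows "down_closed n A v"
  unfolding down_closed_def
proof (intro allI impI)
  fix j k assume "j < n" "k < n" "v j \<and> A j k"
  then have "border n A v n j" "border n A v j k"
    by (auto simp: border_def)
  with assms \<open>j < n\<close> \<open>k < n\<close> have "border n A v n k"
    using poset_matrix_trans[of "Suc n" _ n j k] by simp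
  with \<open>k < n\<close> show "v k"
    by (simp add: border_def)
qed

lemma poset_matrix_border_if_down_closed:
  assumes poset: "poset_matrix n A" and v: "down_closed n A v"
  shows "poset_matrix (Suc n) (border n A v)"
  unfolding poset_matrix_def
proof (intro conjI allI impI)
  fix i assume "i < Suc n"
  then show "border n A v i i"
    using poset_matrix_refl[OF poset] by (simp add: border_def)
next
  fix i j assume "i < Suc n" "j < Suc n" "border n A v i j \<and> border n A v j i"
  then show "i = j"
    using poset_matrix_antisym[OF poset, of i j] by (auto simp: border_def split: if_splits)
next
  fix i j assume "i < Suc n" "j < Suc n" "border n A v i j"
  then show "j \<le> i"
    using poset_matrix_lower[OF poset, of i j] by (auto simp: border_def split: if_splits)
next
  fix i j k assume "i < Suc n" "j < Suc n" "k < Suc n"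
    and chain: "border n A v i j \<and> border n A v j k"
  have "i < n \<Longrightarrow> j < n" "j < n \<Longrightarrow> k < n"
    using chain by (auto simp: border_def split: if_splits)
  then consider "i < n" "j < n" "k < n" | "i = n" "j < n" "k < n" | "i = n" "j = n"
    using \<open>i < Suc n\<close> \<open>j < Suc n\<close> by linarith
  then show "border n A v i k"
  proof cases
    case 1
    then show ?thesis
      using chain poset_matrix_trans[OF poset, of i j k] by (simp add: border_def)
  next
    case 2
    with chain have "v j" "A j k"
      by (simp_all add: border_def)
    with 2 v have "v k"
      unfolding down_closed_def by blast
    with 2 show ?thesis
      by (simp add: border_def)
  next
    case 3
    then show ?thesis
      using chain by simp
  qed
qed

lemma PV_eq_down_closed:
  assumes "poset_matrix n A"
  shows "PV n A = {v \<in> vec n. down_closed n A v}"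
  using assms down_closed_if_poset_matrix_border poset_matrix_border_if_down_closed
  unfolding PV_def by blast

lemma row_space_down_closed:
  assumes "poset_matrix n A" and "v \<in> row_space n A"
  shows "down_closed n A v"
proof -
  obtain S where S: "S \<subseteq> {..<n}" and v: "v = (\<lambda>j. j < n \<and> (\<exists>i\<in>S. A i j))"
    using assms(2) unfolding row_space_def by blast
  show ?thesis
    unfolding down_closed_def v
    using S poset_matrix_trans[OF assms(1)] by blast
qed

lemma row_space_subset_vec: "row_space n A \<subseteq> vec n"
  unfolding row_space_def vec_def by auto

text \<open>The witness is the support of v: it consists of its own rows by reflexivity.\<close>

lemma down_closed_in_row_space:
  assumes poset: "poset_matrix n A" and "v \<in> vec n" and v: "down_closed n A v"
  shows "v \<in> row_space n A"
proof -
  have "v = (\<lambda>j. j < n \<and> (\<exists>i\<in>{i. i < n \<and> v i}. A i j))"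
  proof
    fix j
    show "v j = (j < n \<and> (\<exists>i\<in>{i. i < n \<and> v i}. A i j))"
      using \<open>v \<in> vec n\<close> v poset_matrix_refl[OF poset]
      unfolding vec_def down_closed_def by (cases "j < n") auto
  qed
  moreover have "{i. i < n \<and> v i} \<subseteq> {..<n}"
    by auto
  ultimately show ?thesis
    unfolding row_space_def by blast
qed

theorem theorem2p4:
  fixes n :: nat and A :: "nat \<Rightarrow> nat \<Rightarrow> bool"
  assumes "poset_matrix n A"
  shows "row_space n A = PV n A"
  unfolding PV_eq_down_closed[OF assms]
  using assms row_space_subset_vec row_space_down_closed down_closed_in_row_space
  by blast

end
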